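(* If $G$ is a countably infinite HH-homogeneous graph satisfying property $(\dagger)$, then $G$ is HE-homogeneous.
   Context: All graphs are undirected and loopless; subgraphs are induced. A homomorphism maps adjacent vertices to adjacent vertices. $G$ is HH-homogeneous (resp. HE-homogeneous) if every homomorphism between finite induced subgraphs of $G$ is the restriction of an endomorphism (resp. a surjective endomorphism) of $G$. $G$ has property $(\dagger)$ if for every surjective homomorphism $f:A\to B$ between finite induced subgraphs $A,B$ of $G$ and every vertex $b\notin B$, there exists a vertex $a\notin A$ such that $f\cup\{(a,b)\}$ is a homomorphism from $A\cup\{a\}$ to $B\cup\{b\}$. *)

theory Defs
  imports Main "HOL-Library.Countable_Set"
begin

definition graph :: "'a set \<Rightarrow> ('a \<Rightarrow> 'a \<Rightarrow> bool) \<Rightarrow> bool" where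
  "graph V E \<longleftrightarrow> (\<forall>x y. E x y \<longrightarrow> x \<in> V \<and> y \<in> V) \<and>
     (\<forall>x y. E x y \<longrightarrow> E y x) \<and> (\<forall>x. \<not> E x x)"

text \<open>f is a homomorphism from the induced subgraph on A to the induced subgraph on B
  (only the values of f on A matter).\<close>
definition is_hom :: "('a \<Rightarrow> 'a \<Rightarrow> bool) \<Rightarrow> ('a \<Rightarrow> 'a) \<Rightarrow> 'a set \<Rightarrow> 'a set \<Rightarrow> bool" where
  "is_hom E f A B \<longleftrightarrow> f ` A \<subseteq> B \<and> (\<forall>x\<in>A. \<forall>y\<in>A. E x y \<longrightarrow> E (f x) (f y))"

definition endomorphism :: "'a set \<Rightarrow> ('a \<Rightarrow> 'a \<Rightarrow> bool) \<Rightarrow> ('a \<Rightarrow> 'a) \<Rightarrow> bool" where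
  "endomorphism V E g \<longleftrightarrow> is_hom E g V V"

definition HH_homogeneous :: "'a set \<Rightarrow> ('a \<Rightarrow> 'a \<Rightarrow> bool) \<Rightarrow> bool" where
  "HH_homogeneous V E \<longleftrightarrow>
    (\<forall>A B f. A \<subseteq> V \<and> B \<subseteq> V \<and> finite A \<and> finite B \<and> is_hom E f A B \<longrightarrow>
       (\<exists>g. endomorphism V E g \<and> (\<forall>x\<in>A. g x = f x)))"

definition HE_homogeneous :: "'a set \<Rightarrow> ('a \<Rightarrow> 'a \<Rightarrow> bool) \<Rightarrow> bool" where
  "HE_homogeneous V E \<longleftrightarrow>
    (\<forall>A B f. A \<subseteq> V \<and> B \<subseteq> V \<and> finite A \<and> finite B \<and> is_hom E f A B \<longrightarrow>
       (\<exists>g. endomorphism V E g \<and> g ` V = V \<and> (\<forall>x\<in>A. g x = f x)))"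

definition prop_dagger :: "'a set \<Rightarrow> ('a \<Rightarrow> 'a \<Rightarrow> bool) \<Rightarrow> bool" where
  "prop_dagger V E \<longleftrightarrow>
    (\<forall>A B f. A \<subseteq> V \<and> B \<subseteq> V \<and> finite A \<and> finite B \<and> is_hom E f A B \<and> f ` A = B \<longrightarrow>
       (\<forall>b \<in> V - B. \<exists>a \<in> V - A. is_hom E (f(a := b)) (insert a A) (insert b B)))"

end

theory Submission
  imports Defs
begin

text \<open>Back and forth over an enumeration of V. HH-homogeneity lets a homomorphism from a finite
  subset of V into V be extended to any further vertex of the domain (restrict an endomorphism
  extending it); property (\<dagger>), applied with B the image, lets it be extended so that any
  further vertex lies in the image. Alternating the two steps yields an increasing chain of finite
  partial homomorphisms whose domains and images both exhaust V, and its union is a surjective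
  endomorphism extending the first map.\<close>

definition partial_hom :: "'a set \<Rightarrow> ('a \<Rightarrow> 'a \<Rightarrow> bool) \<Rightarrow> ('a \<Rightarrow> 'a) \<Rightarrow> 'a set \<Rightarrow> bool" where
  "partial_hom V E f A \<longleftrightarrow> A \<subseteq> V \<and> finite A \<and> is_hom E f A V"

lemma is_hom_subset:
  assumes "is_hom E f A B" and "A' \<subseteq> A" and "B \<subseteq> B'"
  shows "is_hom E f A' B'"
  using assms unfolding is_hom_def by blast

lemma partial_hom_forth:
  assumes "HH_homogeneous V E" and "partial_hom V E f A" and "v \<in> V"
  obtains g where "partial_hom V E g (insert v A)" and "\<forall>x\<in>A. g x = f x"
proof -
  have "A \<subseteq> V" "finite A" "is_hom E f A (f ` A)" "f ` A \<subseteq> V"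
    using assms(2) by (auto simp: partial_hom_def is_hom_def)
  then obtain g where g: "endomorphism V E g" and agree: "\<forall>x\<in>A. g x = f x"
    using assms(1) unfolding HH_homogeneous_def by blast
  have "insert v A \<subseteq> V" using \<open>A \<subseteq> V\<close> \<open>v \<in> V\<close> by blast
  with g have "is_hom E g (insert v A) V"
    unfolding endomorphism_def by (rule is_hom_subset[OF _ _ order_refl])
  then have "partial_hom V E g (insert v A)"
    using \<open>insert v A \<subseteq> V\<close> \<open>finite A\<close> unfolding partial_hom_def by blast
  then show thesis using agree by (rule that)
qed

lemma partial_hom_back:
  assumes "prop_dagger V E" and "partial_hom V E f A" and "v \<in> V"
  obtains a g where "partial_hom V E g (insert a A)" and "\<forall>x\<in>A. g x = f x"
    and "v \<in> g ` insert a A"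
proof (cases "v \<in> f ` A")
  case True
  then obtain a where "a \<in> A" "v = f a" by blast
  then have "insert a A = A" by blast
  show thesis
    by (rule that[of f a]) (use assms(2) \<open>insert a A = A\<close> \<open>v = f a\<close> \<open>a \<in> A\<close> in simp_all)
next
  case False
  have A: "A \<subseteq> V" "finite A" "f ` A \<subseteq> V" and hom: "is_hom E f A (f ` A)"
    using assms(2) by (auto simp: partial_hom_def is_hom_def)
  have "v \<in> V - f ` A" using False \<open>v \<in> V\<close> by blast
  then obtain a where a: "a \<in> V - A"
    and hom': "is_hom E (f(a := v)) (insert a A) (insert v (f ` A))"
    using assms(1)[unfolded prop_dagger_def, rule_format, of A "f ` A" f] A hom by blast
  have "insert v (f ` A) \<subseteq> V" using A \<open>v \<in> V\<close> by blast
  with hom' have "is_hom E (f(a := v)) (insert a A) V" by (rule is_hom_subset[OF _ order_refl])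
  then have "partial_hom V E (f(a := v)) (insert a A)"
    using a A unfolding partial_hom_def by blast
  moreover have "\<forall>x\<in>A. (f(a := v)) x = f x" using a by auto
  moreover have "v \<in> (f(a := v)) ` insert a A" by simp
  ultimately show thesis by (rule that)
qed

lemma partial_hom_back_and_forth:
  assumes "HH_homogeneous V E" and "prop_dagger V E" and "partial_hom V E f A" and "v \<in> V"
  shows "\<exists>g A'. partial_hom V E g A' \<and> A \<subseteq> A' \<and> (\<forall>x\<in>A. g x = f x) \<and> v \<in> A' \<and> v \<in> g ` A'"
proof -
  obtain g where g: "partial_hom V E g (insert v A)" and agree: "\<forall>x\<in>A. g x = f x"
    using partial_hom_forth[OF assms(1,3,4)] .
  obtain a h where h: "partial_hom V E h (insert a (insert v A))"
    and agree': "\<forall>x\<in>insert v A. h x = g x" and image: "v \<in> h ` insert a (insert v A)"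
    using partial_hom_back[OF assms(2) g assms(4)] .
  show ?thesis
    using h agree agree' image by (intro exI[of _ h] exI[of _ "insert a (insert v A)"]) auto
qed

lemma chain_agrees:
  assumes dom: "\<And>n. A n \<subseteq> A (Suc n)" and agree: "\<And>n. \<forall>x\<in>A n. f (Suc n) x = f n x"
    and "m \<le> n"
  shows "A m \<subseteq> A n \<and> (\<forall>x\<in>A m. f n x = f m x)"
  using \<open>m \<le> n\<close>
proof (induction n rule: dec_induct)
  case (step n)
  then show ?case using dom[of n] agree[of n] by auto
qed simp

definition chain_limit :: "(nat \<Rightarrow> 'a \<Rightarrow> 'b) \<Rightarrow> (nat \<Rightarrow> 'a set) \<Rightarrow> 'a \<Rightarrow> 'b" where
  "chain_limit f A x = f (LEAST n. x \<in> A n) x"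

lemma chain_limit_eq:
  assumes "\<And>n. A n \<subseteq> A (Suc n)" and "\<And>n. \<forall>x\<in>A n. f (Suc n) x = f n x" and "x \<in> A n"
  shows "chain_limit f A x = f n x"
proof -
  let ?k = "LEAST n. x \<in> A n"
  have "x \<in> A ?k" using \<open>x \<in> A n\<close> by (rule LeastI)
  have "?k \<le> n" using \<open>x \<in> A n\<close> by (rule Least_le)
  then show ?thesis
    using chain_agrees[where A = A and f = f, OF assms(1,2) \<open>?k \<le> n\<close>] \<open>x \<in> A ?k\<close>
    by (simp add: chain_limit_def)
qed

lemma chain_limit_surjective_endomorphism:
  assumes dom: "\<And>n. A n \<subseteq> A (Suc n)" and agree: "\<And>n. \<forall>x\<in>A n. f (Suc n) x = f n x"
    and sub: "\<And>n. A n \<subseteq> V" and hom: "\<And>n. is_hom E (f n) (A n) V"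
    and dom_cover: "\<And>v. v \<in> V \<Longrightarrow> \<exists>n. v \<in> A n"
    and image_cover: "\<And>v. v \<in> V \<Longrightarrow> \<exists>n. v \<in> f n ` A n"
  shows "endomorphism V E (chain_limit f A) \<and> chain_limit f A ` V = V"
proof -
  note limit = chain_limit_eq[where A = A and f = f, OF dom agree]
  have into: "chain_limit f A ` V \<subseteq> V"
  proof
    fix y assume "y \<in> chain_limit f A ` V"
    then obtain x n where "y = chain_limit f A x" "x \<in> A n"
      using dom_cover by blast
    then show "y \<in> V" using limit hom[of n] by (auto simp: is_hom_def)
  qed
  have edges: "E (chain_limit f A x) (chain_limit f A y)" if "x \<in> V" "y \<in> V" "E x y" for x y
  proof -
    obtain m n where "x \<in> A m" "y \<in> A n" using dom_cover \<open>x \<in> V\<close> \<open>y \<in> V\<close> by blast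
    moreover have "A m \<subseteq> A (max m n)" "A n \<subseteq> A (max m n)"
      using chain_agrees[where A = A and f = f, OF dom agree] by simp_all
    ultimately have "x \<in> A (max m n)" "y \<in> A (max m n)" by auto
    then show ?thesis using hom[of "max m n"] limit \<open>E x y\<close> by (simp add: is_hom_def)
  qed
  have onto: "V \<subseteq> chain_limit f A ` V"
  proof
    fix v assume "v \<in> V"
    then obtain n a where "a \<in> A n" "v = f n a" using image_cover by blast
    then have "chain_limit f A a = v" and "a \<in> V" using limit sub[of n] by auto
    then show "v \<in> chain_limit f A ` V" by blast
  qed
  show ?thesis
    using into edges onto unfolding endomorphism_def is_hom_def by blast
qed

lemma back_and_forth_surjective_extension:
  assumes "countable V" and "V \<noteq> {}"
    and step: "\<And>f A v. partial_hom V E f A \<Longrightarrow> v \<in> V \<Longrightarrow>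
      \<exists>g A'. partial_hom V E g A' \<and> A \<subseteq> A' \<and> (\<forall>x\<in>A. g x = f x) \<and> v \<in> A' \<and> v \<in> g ` A'"
    and "partial_hom V E f A"
  shows "\<exists>g. endomorphism V E g \<and> g ` V = V \<and> (\<forall>x\<in>A. g x = f x)"
proof -
  define en where "en = from_nat_into V"
  have en: "en n \<in> V" for n using \<open>V \<noteq> {}\<close> by (simp add: en_def from_nat_into)
  define P where "P n t \<longleftrightarrow> partial_hom V E (fst t) (snd t) \<and> (n = 0 \<longrightarrow> t = (f, A))"
    for n :: nat and t :: "('a \<Rightarrow> 'a) \<times> 'a set"
  define Q where "Q n t t' \<longleftrightarrow> snd t \<subseteq> snd t' \<and> (\<forall>x\<in>snd t. fst t' x = fst t x)
      \<and> en n \<in> snd t' \<and> en n \<in> fst t' ` snd t'" for n :: nat and t t' :: "('a \<Rightarrow> 'a) \<times> 'a set"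
  have "\<exists>s. \<forall>n. P n (s n) \<and> Q n (s n) (s (Suc n))"
  proof (rule dependent_nat_choice)
    show "\<exists>t. P 0 t" using \<open>partial_hom V E f A\<close> by (auto simp: P_def)
  next
    fix t n assume "P n t"
    then obtain g A' where "partial_hom V E g A'" "snd t \<subseteq> A'" "\<forall>x\<in>snd t. g x = fst t x"
      "en n \<in> A'" "en n \<in> g ` A'"
      using step[of "fst t" "snd t" "en n"] en unfolding P_def by blast
    then show "\<exists>t'. P (Suc n) t' \<and> Q n t t'"
      unfolding P_def Q_def by (intro exI[of _ "(g, A')"]) simp
  qed
  then obtain s where P: "\<And>n. P n (s n)" and Q: "\<And>n. Q n (s n) (s (Suc n))" by blast
  define F D where "F = fst \<circ> s" and "D = snd \<circ> s"
  have dom: "D n \<subseteq> D (Suc n)" and agree: "\<forall>x\<in>D n. F (Suc n) x = F n x"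
    and sub: "D n \<subseteq> V" and hom: "is_hom E (F n) (D n) V" for n
    using P[of n] Q[of n] by (auto simp: P_def Q_def F_def D_def partial_hom_def)
  have cover: "\<exists>n. v \<in> D n \<and> v \<in> F n ` D n" if "v \<in> V" for v
  proof -
    obtain n where "en n = v" using from_nat_into_surj[OF \<open>countable V\<close> \<open>v \<in> V\<close>] en_def by blast
    then show ?thesis using Q[of n] by (auto simp: Q_def F_def D_def)
  qed
  have "endomorphism V E (chain_limit F D) \<and> chain_limit F D ` V = V"
    using chain_limit_surjective_endomorphism[where A = D and f = F, OF dom agree sub hom] cover by blast
  moreover have "chain_limit F D x = f x" if "x \<in> A" for x
  proof -
    have "s 0 = (f, A)" using P[of 0] by (simp add: P_def)
    then show ?thesis
      using chain_limit_eq[where A = D and f = F, OF dom agree, of x 0] that by (simp add: F_def D_def)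
  qed
  ultimately show ?thesis by blast
qed

theorem proposition4p4:
  fixes V :: "'a set" and E :: "'a \<Rightarrow> 'a \<Rightarrow> bool"
  assumes "graph V E"
    and "countable V" and "infinite V"
    and "HH_homogeneous V E"
    and "prop_dagger V E"
  shows "HE_homogeneous V E"
  unfolding HE_homogeneous_def
proof (intro allI impI)
  fix A B f
  assume "A \<subseteq> V \<and> B \<subseteq> V \<and> finite A \<and> finite B \<and> is_hom E f A B"
  then have "partial_hom V E f A" by (auto simp: partial_hom_def is_hom_def)
  moreover have "V \<noteq> {}" using \<open>infinite V\<close> by auto
  ultimately show "\<exists>g. endomorphism V E g \<and> g ` V = V \<and> (\<forall>x\<in>A. g x = f x)"
    using back_and_forth_surjective_extension[OF \<open>countable V\<close> _ partial_hom_back_and_forth[OF assms(4,5)]]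
    by blast
qed

end
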